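(* Let $d\ge2$, let $\Omega\subset\mathbb R^d$ be a nonempty bounded open convex polytope, and let $E\subset\mathbb R^d$ be endowed with a Borel probability measure $\mu$ such that $(E,\mu)$ is weakly incoming to $\Omega$. Then there exist measurable subsets $F_1,\dots,F_d\subset E$ with $\mu(F_j)>0$ for all $j$ such that every $(f_1,\dots,f_d)\in\prod_{j=1}^dF_j$ spans $\mathbb R^d$. Moreover, the sets $F_j$ can be chosen with arbitrarily small diameters.
   Context: $\Omega=\{x\in\mathbb R^d:\ \ell_j(x)>b_j,\ j=1,\dots,m\}$ for linear forms $\ell_j$ and reals $b_j$. Define $\mathrm c:\mathbb R^d\to\mathbb N\cup\{+\infty\}$ by $\mathrm c(x)=0$ if $x\in\Omega$, $+\infty$ if $x\notin\overline\Omega$, $\#\{i:\ell_i(x)=b_i\}$ if $x\in\partial\Omega$. $(E,\mu)$ is weakly incoming to $\Omega$ if for every $x_0\in\partial\Omega$ there exist $\epsilon>0$, $\theta\in\{\pm1\}$ and a measurable $F\subset E$ with $\mu(F)>0$ such that $\mathrm c(x_0+\theta te)<\mathrm c(x_0)$ for all $t\in]0,\epsilon]$ and all $e\in F$. *)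

theory Defs
  imports "HOL-Probability.Probability"
begin

definition polytope :: "nat \<Rightarrow> (nat \<Rightarrow> real^'d) \<Rightarrow> (nat \<Rightarrow> real) \<Rightarrow> (real^'d) set" where
  "polytope m a b = {x. \<forall>j<m. a j \<bullet> x > b j}"

definition cfun :: "nat \<Rightarrow> (nat \<Rightarrow> real^'d) \<Rightarrow> (nat \<Rightarrow> real) \<Rightarrow> real^'d \<Rightarrow> enat" where
  "cfun m a b x =
     (if x \<in> polytope m a b then 0
      else if x \<notin> closure (polytope m a b) then \<infinity>
      else enat (card {i. i < m \<and> a i \<bullet> x = b i}))"

text \<open>(E, mu) is weakly incoming to Omega; E is the space of mu.\<close>
definition weakly_incoming :: "(real^'d) measure \<Rightarrow> nat \<Rightarrow> (nat \<Rightarrow> real^'d) \<Rightarrow> (nat \<Rightarrow> real) \<Rightarrow> bool" where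
  "weakly_incoming \<mu> m a b \<longleftrightarrow>
     (\<forall>x0 \<in> frontier (polytope m a b).
        \<exists>\<epsilon>>0. \<exists>\<theta>\<in>{-1, 1::real}. \<exists>F \<in> sets \<mu>. emeasure \<mu> F > 0 \<and>
          (\<forall>t\<in>{0<..\<epsilon>}. \<forall>e\<in>F. cfun m a b (x0 + (\<theta> * t) *\<^sub>R e) < cfun m a b x0))"

end

theory Submission
  imports Defs
begin

text \<open>If all of \<open>\<mu>\<close> lived in a hyperplane \<open>n \<bullet> x = 0\<close>, take the face of \<open>\<Omega>\<close> on which
  \<open>n \<bullet> x\<close> is maximal and a point \<open>x\<^sub>0\<close> of that face with the fewest active constraints.
  Weak incomingness moves \<open>x\<^sub>0\<close> along some direction \<open>e\<close> with \<open>n \<bullet> e = 0\<close>, i.e. within the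
  face, to a point with strictly fewer active constraints, which is absurd. Hence the
  support of \<open>\<mu>\<close> spans \<open>\<real>\<^sup>d\<close> and contains a basis; spanning is an open condition on
  \<open>d\<close>-tuples (the determinant is continuous), so small balls around the basis vectors,
  which have positive measure, do the job.\<close>

definition measure_support :: "'a::metric_space measure \<Rightarrow> 'a set" where
  "measure_support \<mu> = {x. \<forall>r>0. emeasure \<mu> (space \<mu> \<inter> ball x r) > 0}"

lemma null_outside_measure_support:
  fixes \<mu> :: "'a::{metric_space, second_countable_topology} measure"
  assumes open_meas: "\<And>U. open U \<Longrightarrow> space \<mu> \<inter> U \<in> sets \<mu>"
  shows "\<exists>N \<in> null_sets \<mu>. space \<mu> - measure_support \<mu> \<subseteq> N"
proof -
  define \<B> where "\<B> = {ball x r | x r. r > 0 \<and> emeasure \<mu> (space \<mu> \<inter> ball x r) = 0}"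
  obtain \<B>' where "\<B>' \<subseteq> \<B>" and "countable \<B>'" and "\<Union>\<B>' = \<Union>\<B>"
    by (rule Lindelof[of \<B>]) (auto simp: \<B>_def)
  have null: "(\<Union>U\<in>\<B>'. space \<mu> \<inter> U) \<in> null_sets \<mu>"
  proof (rule null_sets_UN')
    fix U assume "U \<in> \<B>'"
    with \<open>\<B>' \<subseteq> \<B>\<close> show "space \<mu> \<inter> U \<in> null_sets \<mu>"
      using open_meas by (auto simp: \<B>_def)
  qed (rule \<open>countable \<B>'\<close>)
  have "space \<mu> - measure_support \<mu> \<subseteq> (\<Union>U\<in>\<B>'. space \<mu> \<inter> U)"
  proof
    fix x assume "x \<in> space \<mu> - measure_support \<mu>"
    then obtain r where "x \<in> space \<mu>" "r > 0" "emeasure \<mu> (space \<mu> \<inter> ball x r) = 0"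
      by (auto simp: measure_support_def not_gr_zero)
    then have "ball x r \<in> \<B>" and "x \<in> ball x r" by (auto simp: \<B>_def)
    then show "x \<in> (\<Union>U\<in>\<B>'. space \<mu> \<inter> U)"
      using \<open>\<Union>\<B>' = \<Union>\<B>\<close> \<open>x \<in> space \<mu>\<close> by blast
  qed
  with null show ?thesis by blast
qed

lemma span_range_eq_UNIV_iff_det_nonzero:
  "span (range f) = UNIV \<longleftrightarrow> det (\<chi> i. (f i :: real^'n)) \<noteq> 0"
proof -
  have "rows (\<chi> i. f i) = range f" by (auto simp: rows_def row_def vec_eq_iff)
  then show ?thesis
    by (metis matrix_left_invertible_span_rows invertible_det_nz invertible_left_inverse)
qed

lemma spanning_family_stable:
  fixes g :: "'n \<Rightarrow> real^'n"
  assumes "span (range g) = UNIV"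
  obtains r where "r > 0" and "\<And>f. (\<And>j. dist (f j) (g j) < r) \<Longrightarrow> span (range f) = UNIV"
proof -
  define M where "M = (\<chi> i. g i)"
  have "det M \<noteq> 0" using assms by (simp add: M_def span_range_eq_UNIV_iff_det_nonzero)
  moreover have "continuous_on UNIV (det :: real^'n^'n \<Rightarrow> real)"
    unfolding det_def by (intro continuous_intros)
  ultimately obtain r where r: "r > 0" "\<And>A. dist A M < r \<Longrightarrow> dist (det A) (det M) < \<bar>det M\<bar>"
    unfolding continuous_on_iff by (metis UNIV_I zero_less_abs_iff)
  show ?thesis
  proof (rule that[of "r / CARD('n)"])
    show "r / CARD('n) > 0" using r(1) by simp
    fix f assume close: "\<And>j. dist (f j) (g j) < r / CARD('n)"
    have "dist (\<chi> i. f i) M \<le> (\<Sum>i\<in>UNIV. norm ((\<chi> i. f i) $ i - M $ i))"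
      unfolding dist_norm norm_vec_def by (simp add: L2_set_le_sum)
    also have "\<dots> = (\<Sum>i\<in>UNIV. dist (f i) (g i))" by (simp add: M_def dist_norm)
    also have "\<dots> < (\<Sum>i\<in>(UNIV::'n set). r / CARD('n))"
      by (rule sum_strict_mono) (auto simp: close)
    also have "\<dots> = r" by simp
    finally have "dist (det (\<chi> i. f i)) (det M) < \<bar>det M\<bar>" using r(2) by blast
    then have "det (\<chi> i. f i) \<noteq> 0" by (auto simp: dist_real_def)
    then show "span (range f) = UNIV" by (simp add: span_range_eq_UNIV_iff_det_nonzero)
  qed
qed

lemma linear_argmax_notin_interior:
  fixes n :: "'a::real_inner"
  assumes "n \<noteq> 0" and max: "\<forall>y\<in>S. n \<bullet> y \<le> n \<bullet> x"
  shows "x \<notin> interior S"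
proof
  assume "x \<in> interior S"
  then obtain e where "e > 0" "ball x e \<subseteq> S" by (meson mem_interior)
  define z where "z = x + (e / (2 * norm n)) *\<^sub>R n"
  have "norm n > 0" using assms(1) by simp
  then have "dist x z = e / 2" using \<open>e > 0\<close> by (simp add: z_def dist_norm)
  with \<open>e > 0\<close> \<open>ball x e \<subseteq> S\<close> have "z \<in> S" by auto
  moreover have "n \<bullet> z = n \<bullet> x + e * norm n / 2"
    using \<open>norm n > 0\<close>
    by (simp add: z_def inner_add_right power2_norm_eq_inner[symmetric] power2_eq_square)
  moreover have "e * norm n > 0" using \<open>e > 0\<close> \<open>norm n > 0\<close> by simp
  ultimately show False using max by fastforce
qed

lemma cfun_outside_closure: "x \<notin> closure (polytope m a b) \<Longrightarrow> cfun m a b x = \<infinity>"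
  using closure_subset by (fastforce simp: cfun_def)

lemma polytope_face_point_least_cfun:
  fixes n :: "real^'d"
  assumes "polytope m a b \<noteq> {}" and "bounded (polytope m a b)" and "n \<noteq> 0"
  obtains x0 where "x0 \<in> frontier (polytope m a b)"
    and "\<And>y. y \<in> closure (polytope m a b) \<Longrightarrow> n \<bullet> y = n \<bullet> x0 \<Longrightarrow> cfun m a b x0 \<le> cfun m a b y"
proof -
  let ?C = "closure (polytope m a b)"
  have "compact ?C" and "?C \<noteq> {}" using assms(1,2) by (auto simp: compact_closure)
  moreover have "continuous_on ?C (\<lambda>x. n \<bullet> x)" by (intro continuous_intros)
  ultimately obtain x1 where "x1 \<in> ?C" and max: "\<forall>y\<in>?C. n \<bullet> y \<le> n \<bullet> x1"
    using continuous_attains_sup by blast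
  define face where "face = {x\<in>?C. n \<bullet> x = n \<bullet> x1}"
  have "\<exists>k. \<exists>x\<in>face. cfun m a b x = k" using \<open>x1 \<in> ?C\<close> by (auto simp: face_def)
  from LeastI_ex[OF this] obtain x0
    where x0: "x0 \<in> face" "cfun m a b x0 = (LEAST k. \<exists>x\<in>face. cfun m a b x = k)"
    by blast
  have least: "cfun m a b x0 \<le> cfun m a b y" if "y \<in> face" for y
    unfolding x0(2) by (rule Least_le) (use that in blast)
  have "x0 \<notin> interior ?C"
    using linear_argmax_notin_interior[OF assms(3)] max x0(1) by (simp add: face_def)
  then have "x0 \<in> frontier (polytope m a b)"
    using x0(1) interior_mono[OF closure_subset] by (auto simp: face_def frontier_def)
  then show ?thesis using that least x0(1) by (simp add: face_def)
qed

lemma weakly_incoming_not_in_hyperplane: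
  fixes n :: "real^'d"
  assumes "polytope m a b \<noteq> {}" and "bounded (polytope m a b)" and "n \<noteq> 0"
    and "weakly_incoming \<mu> m a b"
    and open_meas: "\<And>U. open U \<Longrightarrow> space \<mu> \<inter> U \<in> sets \<mu>"
  shows "emeasure \<mu> (space \<mu> - {x. n \<bullet> x = 0}) > 0"
proof -
  obtain x0 where "x0 \<in> frontier (polytope m a b)" and least:
    "\<And>y. y \<in> closure (polytope m a b) \<Longrightarrow> n \<bullet> y = n \<bullet> x0 \<Longrightarrow> cfun m a b x0 \<le> cfun m a b y"
    using polytope_face_point_least_cfun[OF assms(1-3)] by blast
  then obtain \<epsilon> \<theta> F where "\<epsilon> > 0" "F \<in> sets \<mu>" "emeasure \<mu> F > 0"
    and decr: "\<forall>t\<in>{0<..\<epsilon>}. \<forall>e\<in>F. cfun m a b (x0 + (\<theta> * t) *\<^sub>R e) < cfun m a b x0"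
    using assms(4) unfolding weakly_incoming_def by blast
  have "n \<bullet> e \<noteq> 0" if "e \<in> F" for e
  proof
    assume "n \<bullet> e = 0"
    define y where "y = x0 + (\<theta> * \<epsilon>) *\<^sub>R e"
    have "cfun m a b y < cfun m a b x0" using decr \<open>\<epsilon> > 0\<close> that by (simp add: y_def)
    then have "y \<in> closure (polytope m a b)" using cfun_outside_closure by fastforce
    moreover have "n \<bullet> y = n \<bullet> x0" using \<open>n \<bullet> e = 0\<close> by (simp add: y_def inner_add_right)
    ultimately show False using least \<open>cfun m a b y < cfun m a b x0\<close> by (simp add: leD)
  qed
  then have "F \<subseteq> space \<mu> - {x. n \<bullet> x = 0}" using sets.sets_into_space[OF \<open>F \<in> sets \<mu>\<close>] by blast
  moreover have "space \<mu> - {x. n \<bullet> x = 0} \<in> sets \<mu>"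
    using open_meas[of "- {x. n \<bullet> x = 0}"] by (simp add: closed_hyperplane Diff_eq open_Compl)
  ultimately show ?thesis using \<open>emeasure \<mu> F > 0\<close> emeasure_mono by (metis order_less_le_trans)
qed

lemma weakly_incoming_support_spans:
  fixes \<mu> :: "(real^'d) measure"
  assumes "polytope m a b \<noteq> {}" and "bounded (polytope m a b)"
    and "weakly_incoming \<mu> m a b"
    and open_meas: "\<And>U. open U \<Longrightarrow> space \<mu> \<inter> U \<in> sets \<mu>"
  shows "span (measure_support \<mu>) = UNIV"
proof (rule ccontr)
  obtain N where N: "N \<in> null_sets \<mu>" "space \<mu> - measure_support \<mu> \<subseteq> N"
    using null_outside_measure_support[OF open_meas] by blast
  assume "span (measure_support \<mu>) \<noteq> UNIV"
  then have "dim (measure_support \<mu>) < DIM(real^'d)"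
    using dim_subset_UNIV dim_eq_full by (metis le_neq_implies_less)
  then obtain n :: "real^'d" where "n \<noteq> 0"
    and "\<And>y. y \<in> span (measure_support \<mu>) \<Longrightarrow> orthogonal n y"
    using orthogonal_to_subspace_exists by blast
  then have "measure_support \<mu> \<subseteq> {x. n \<bullet> x = 0}"
    using span_base by (fastforce simp: orthogonal_def)
  then have "emeasure \<mu> (space \<mu> - {x. n \<bullet> x = 0}) \<le> emeasure \<mu> N"
    using N(2) null_setsD2[OF N(1)] by (intro emeasure_mono) auto
  with N(1) weakly_incoming_not_in_hyperplane[OF assms(1,2) \<open>n \<noteq> 0\<close> assms(3) open_meas]
  show False by auto
qed

lemma spanning_set_obtains_basis:
  fixes S :: "(real^'n) set"
  assumes "span S = UNIV"
  obtains g :: "'n \<Rightarrow> real^'n" where "range g \<subseteq> S" and "span (range g) = UNIV"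
proof -
  obtain B where "B \<subseteq> S" "independent B" "S \<subseteq> span B"
    by (rule maximal_independent_subset)
  then have "span B = UNIV"
    by (metis assms span_mono span_span top.extremum_uniqueI)
  then have "finite B" and "card B = CARD('n)"
    using \<open>independent B\<close> basis_card_eq_dim[of B UNIV] independent_imp_finite
    by (auto simp: dim_UNIV)
  then obtain g where "bij_betw g (UNIV :: 'n set) B"
    using finite_same_card_bij[of "UNIV :: 'n set" B] by auto
  then show ?thesis
    using \<open>B \<subseteq> S\<close> \<open>span B = UNIV\<close> by (intro that[of g]) (simp_all add: bij_betw_def)
qed

lemma measure_support_small_spanning_sets:
  fixes g :: "'n \<Rightarrow> real^'n"
  assumes open_meas: "\<And>U. open U \<Longrightarrow> space \<mu> \<inter> U \<in> sets \<mu>"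
    and g_supp: "range g \<subseteq> measure_support \<mu>" and "span (range g) = UNIV" and "\<delta> > 0"
  shows "\<exists>F :: 'n \<Rightarrow> (real^'n) set.
            (\<forall>j. F j \<in> sets \<mu> \<and> emeasure \<mu> (F j) > 0 \<and> diameter (F j) < \<delta>) \<and>
            (\<forall>f. (\<forall>j. f j \<in> F j) \<longrightarrow> span (range f) = UNIV)"
proof -
  obtain r where "r > 0"
    and stable: "\<And>f. (\<And>j. dist (f j) (g j) < r) \<Longrightarrow> span (range f) = UNIV"
    using spanning_family_stable[OF \<open>span (range g) = UNIV\<close>] by blast
  define \<rho> where "\<rho> = min r (\<delta> / 3)"
  have "\<rho> > 0" using \<open>r > 0\<close> \<open>\<delta> > 0\<close> by (simp add: \<rho>_def)
  show ?thesis
  proof (intro exI[of _ "\<lambda>j. space \<mu> \<inter> ball (g j) \<rho>"] conjI allI impI)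
    fix j
    show "space \<mu> \<inter> ball (g j) \<rho> \<in> sets \<mu>" by (simp add: open_meas)
    have "g j \<in> measure_support \<mu>" using g_supp by blast
    then show "emeasure \<mu> (space \<mu> \<inter> ball (g j) \<rho>) > 0"
      using \<open>\<rho> > 0\<close> by (simp add: measure_support_def)
    have "diameter (space \<mu> \<inter> ball (g j) \<rho>) \<le> diameter (ball (g j) \<rho>)"
      by (rule diameter_subset) auto
    also have "\<dots> < \<delta>" using \<open>\<rho> > 0\<close> \<open>\<delta> > 0\<close> by (simp add: diameter_ball \<rho>_def min_def)
    finally show "diameter (space \<mu> \<inter> ball (g j) \<rho>) < \<delta>" .
  next
    fix f assume "\<forall>j. f j \<in> space \<mu> \<inter> ball (g j) \<rho>"
    then show "span (range f) = UNIV" by (intro stable) (auto simp: dist_commute \<rho>_def)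
  qed
qed

theorem lemma5p2:
  fixes m :: nat and a :: "nat \<Rightarrow> real^'d" and b :: "nat \<Rightarrow> real"
    and E :: "(real^'d) set" and \<mu> :: "(real^'d) measure"
  assumes "CARD('d) \<ge> 2"
    and "polytope m a b \<noteq> {}"
    and "bounded (polytope m a b)"
    and "prob_space \<mu>"
    and "sets \<mu> = sets (restrict_space borel E)"
    and "space \<mu> = E"
    and "weakly_incoming \<mu> m a b"
  shows "(\<exists>F :: 'd \<Rightarrow> (real^'d) set.
            (\<forall>j. F j \<in> sets \<mu> \<and> emeasure \<mu> (F j) > 0) \<and>
            (\<forall>f. (\<forall>j. f j \<in> F j) \<longrightarrow> span (range f) = UNIV))
       \<and> (\<forall>\<delta>>0. \<exists>F :: 'd \<Rightarrow> (real^'d) set.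
            (\<forall>j. F j \<in> sets \<mu> \<and> emeasure \<mu> (F j) > 0 \<and> diameter (F j) < \<delta>) \<and>
            (\<forall>f. (\<forall>j. f j \<in> F j) \<longrightarrow> span (range f) = UNIV))"
proof -
  have open_meas: "space \<mu> \<inter> U \<in> sets \<mu>" if "open U" for U
    using that assms(5,6) by (auto simp: sets_restrict_space)
  have "span (measure_support \<mu>) = UNIV"
    using weakly_incoming_support_spans[OF assms(2,3,7)] open_meas by blast
  then obtain g :: "'d \<Rightarrow> real^'d"
    where g_supp: "range g \<subseteq> measure_support \<mu>" and g_span: "span (range g) = UNIV"
    by (rule spanning_set_obtains_basis)
  have small: "\<exists>F :: 'd \<Rightarrow> (real^'d) set.
            (\<forall>j. F j \<in> sets \<mu> \<and> emeasure \<mu> (F j) > 0 \<and> diameter (F j) < \<delta>) \<and>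
            (\<forall>f. (\<forall>j. f j \<in> F j) \<longrightarrow> span (range f) = UNIV)" if "\<delta> > 0" for \<delta>
    by (rule measure_support_small_spanning_sets) (use open_meas g_supp g_span that in auto)
  then show ?thesis by (metis zero_less_one)
qed

end
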